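(* Let $N\ge 1$ and let $R(k_1,k_2)\in\mathrm{End}(\mathbb{C}^N\otimes\mathbb{C}^N)$ be a matrix-valued function of two real spectral parameters satisfying the Yang–Baxter equation $R_{12}(k_1,k_2)R_{13}(k_1,k_3)R_{23}(k_2,k_3)=R_{23}(k_2,k_3)R_{13}(k_1,k_3)R_{12}(k_1,k_2)$ and the unitarity condition $R_{12}(k_1,k_2)R_{21}(k_2,k_1)=\mathbb{I}\otimes\mathbb{I}$. Let $\mathcal{A}_R$ be the associated Zamolodchikov–Faddeev algebra and $T(k)$ its well-bred vertex operator (see context). Let $B(k)$ be a numerical $N\times N$ matrix-valued function such that $$R_{12}\,B_1\,R'_{21}\,B_2=B_2\,R'_{12}\,B_1\,\bar R_{21},\qquad B(k)B(-k)=\mathbb{I}_N .$$ Define $$\tilde a(k)=\tfrac12\big(a(k)+b(k)a(-k)\big),\quad \tilde a^\dagger(k)=\tfrac12\big(a^\dagger(k)+a^\dagger(-k)b(-k)\big),\quad b(k)=T(k)B(k)T(-k)^{-1}.$$ Then these elements satisfy the relations of the boundary algebra $\mathcal{B}_R$: $$\tilde a_1\tilde a_2=R_{21}\tilde a_2\tilde a_1,\qquad \tilde a^\dagger_1\tilde a^\dagger_2=\tilde a^\dagger_2\tilde a^\dagger_1R_{21},$$ $$\tilde a_1\tilde a^\dagger_2=\tilde a^\dagger_2R_{12}\tilde a_1+\tfrac12\delta_{12}+\tfrac12 b_{12},$$ $$\tilde a_1 b_2=R_{21}\,b_2\,R'_{12}\,\tilde a_1,\qquad b_1\tilde a^\dagger_2=\tilde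 a^\dagger_2\,R_{12}\,b_1\,R'_{21},$$ $$R_{12}\,b_1\,R'_{21}\,b_2=b_2\,R'_{12}\,b_1\,\bar R_{21},\qquad b(k)b(-k)=\mathbb{I}.$$
   Context: Notation: $e_i$ ($i=1,\dots,N$) is the standard column basis of $\mathbb{C}^N$, $e_i^\dagger$ the corresponding row vector, $E_{ij}$ the matrix units. Subscripts $1,2,3$ indicate the tensor factor of $\mathbb{C}^N$ on which a matrix acts and the spectral parameter $k_1,k_2,k_3$ attached: $R_{12}=R_{12}(k_1,k_2)$, $R_{21}=R_{21}(k_2,k_1)$ (i.e. $R$ acting in spaces $2,1$), $R'_{12}=R_{12}(k_1,-k_2)$, $R'_{21}=R_{21}(k_2,-k_1)$, $\bar R_{12}=R_{12}(-k_1,-k_2)$, $\bar R_{21}=R_{21}(-k_2,-k_1)$. For a matrix $M(k)$, $M_1=M(k_1)\otimes\mathbb{I}_N$, $M_2=\mathbb{I}_N\otimes M(k_2)$. ZF algebra $\mathcal{A}_R$: generators $a_i(k),a_i^\dagger(k)$, $i=1,\dots,N$, $k\in\mathbb{R}$; writing $a(k)=\sum_i a_i(k)e_i$ (column), $a^\dagger(k)=\sum_i a_i^\dagger(k)e_i^\dagger$ (row), $a_1=\sum_i a_i(k_1)e_i\otimes\mathbb{I}$, $a_2=\sum_i a_i(k_2)\mathbb{I}\otimes e_i$, similarly $a_1^\dagger,a_2^\dagger$, and $\delta_{12}=\delta(k_1-k_2)\sum_i e_i\otimes e_i^\dagger$, the relations are $a_1a_2=R_{21}a_2a_1$, $a_1^\dagger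 a_2^\dagger=a_2^\dagger a_1^\dagger R_{21}$, $a_1a_2^\dagger=a_2^\dagger R_{12}a_1+\delta_{12}$. Well-bred vertex operator: $T(k)=\sum_{i,j}T^{ij}(k)E_{ij}$, an invertible $N\times N$ matrix with entries in (a completion of) $\mathcal{A}_R$ (given by a normally ordered series in $a^\dagger,a$ with leading term $\mathbb{I}$), satisfying $T_1a_2=R_{21}a_2T_1$, $T_1a_2^\dagger=a_2^\dagger R_{12}T_1$, $R_{12}T_1T_2=T_2T_1R_{12}$. Also $b_1(k)=\sum_{ij}b_{ij}(k)E_{ij}\otimes\mathbb{I}$, $b_2(k)=\sum_{ij}b_{ij}(k)\mathbb{I}\otimes E_{ij}$, $\tilde a_1,\tilde a_2,\tilde a^\dagger_1,\tilde a^\dagger_2$ as for $a$, and $b_{12}=\delta(k_1+k_2)\sum_{i,j}b_{ij}(k_1)\,e_i\otimes e_j^\dagger$. *)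

theory Defs
  imports Complex_Main
begin

text \<open>Indices of the standard basis of C^N are 0,...,N-1.
A matrix on C^N (x) C^N is a function X i j p q giving the entry
(e_i (x) e_j)^T X (e_p (x) e_q). The R-matrix is R x y i j p q = entry of R_12(x,y).
The ring 'A plays the role of (a completion of) the ZF algebra; complex scalars act
through the central unital ring homomorphism sc; the delta distribution delta(x) is
modelled by a central element dl x that vanishes for x /= 0 and is even.\<close>

definition kd :: "nat \<Rightarrow> nat \<Rightarrow> 'a::zero_neq_one" where
  "kd i j = (if i = j then 1 else 0)"

definition mul2 :: "nat \<Rightarrow> (nat \<Rightarrow> nat \<Rightarrow> nat \<Rightarrow> nat \<Rightarrow> 'a::semiring_0)
   \<Rightarrow> (nat \<Rightarrow> nat \<Rightarrow> nat \<Rightarrow> nat \<Rightarrow> 'a) \<Rightarrow> (nat \<Rightarrow> nat \<Rightarrow> nat \<Rightarrow> nat \<Rightarrow> 'a)" where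
  "mul2 N X Y = (\<lambda>i j p q. \<Sum>r<N. \<Sum>s<N. X i j r s * Y r s p q)"

text \<open>M_1 = M (x) I and M_2 = I (x) M.\<close>
definition op_1 :: "(nat \<Rightarrow> nat \<Rightarrow> 'a::zero) \<Rightarrow> (nat \<Rightarrow> nat \<Rightarrow> nat \<Rightarrow> nat \<Rightarrow> 'a)" where
  "op_1 M = (\<lambda>i j p q. if j = q then M i p else 0)"

definition op_2 :: "(nat \<Rightarrow> nat \<Rightarrow> 'a::zero) \<Rightarrow> (nat \<Rightarrow> nat \<Rightarrow> nat \<Rightarrow> nat \<Rightarrow> 'a)" where
  "op_2 M = (\<lambda>i j p q. if i = p then M j q else 0)"

text \<open>R_21(x,y) = P R_12(x,y) P (R acting in spaces 2,1).\<close>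
definition op21 :: "(real \<Rightarrow> real \<Rightarrow> nat \<Rightarrow> nat \<Rightarrow> nat \<Rightarrow> nat \<Rightarrow> 'a)
   \<Rightarrow> real \<Rightarrow> real \<Rightarrow> (nat \<Rightarrow> nat \<Rightarrow> nat \<Rightarrow> nat \<Rightarrow> 'a)" where
  "op21 R x y = (\<lambda>i j p q. R x y j i q p)"

definition id2 :: "nat \<Rightarrow> nat \<Rightarrow> nat \<Rightarrow> nat \<Rightarrow> 'a::semiring_1" where
  "id2 i j p q = kd i p * kd j q"

definition eq2 :: "nat \<Rightarrow> (nat \<Rightarrow> nat \<Rightarrow> nat \<Rightarrow> nat \<Rightarrow> 'a) \<Rightarrow> (nat \<Rightarrow> nat \<Rightarrow> nat \<Rightarrow> nat \<Rightarrow> 'a) \<Rightarrow> bool" where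
  "eq2 N X Y \<longleftrightarrow> (\<forall>i<N. \<forall>j<N. \<forall>p<N. \<forall>q<N. X i j p q = Y i j p q)"

definition yang_baxter :: "nat \<Rightarrow> (real \<Rightarrow> real \<Rightarrow> nat \<Rightarrow> nat \<Rightarrow> nat \<Rightarrow> nat \<Rightarrow> complex) \<Rightarrow> bool" where
  "yang_baxter N R \<longleftrightarrow> (\<forall>k1 k2 k3. \<forall>i<N. \<forall>j<N. \<forall>l<N. \<forall>p<N. \<forall>q<N. \<forall>m<N.
     (\<Sum>a<N. \<Sum>b<N. \<Sum>f<N. R k1 k2 i j a b * R k1 k3 a l p f * R k2 k3 b f q m)
   = (\<Sum>b<N. \<Sum>c<N. \<Sum>d<N. R k2 k3 j l b c * R k1 k3 i c d m * R k1 k2 d b p q))"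

definition unitary_R :: "nat \<Rightarrow> (real \<Rightarrow> real \<Rightarrow> nat \<Rightarrow> nat \<Rightarrow> nat \<Rightarrow> nat \<Rightarrow> complex) \<Rightarrow> bool" where
  "unitary_R N R \<longleftrightarrow> (\<forall>k1 k2. eq2 N (mul2 N (R k1 k2) (op21 R k2 k1)) id2)"

definition refl_eq :: "nat \<Rightarrow> (real \<Rightarrow> real \<Rightarrow> nat \<Rightarrow> nat \<Rightarrow> nat \<Rightarrow> nat \<Rightarrow> 'a::semiring_0)
    \<Rightarrow> (real \<Rightarrow> nat \<Rightarrow> nat \<Rightarrow> 'a) \<Rightarrow> bool" where
  "refl_eq N R X \<longleftrightarrow> (\<forall>k1 k2.
     eq2 N (mul2 N (mul2 N (mul2 N (R k1 k2) (op_1 (X k1))) (op21 R k2 (-k1))) (op_2 (X k2)))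
           (mul2 N (mul2 N (mul2 N (op_2 (X k2)) (R k1 (-k2))) (op_1 (X k1))) (op21 R (-k2) (-k1))))"

definition inv_pair :: "nat \<Rightarrow> (real \<Rightarrow> nat \<Rightarrow> nat \<Rightarrow> 'a::semiring_1) \<Rightarrow> bool" where
  "inv_pair N X \<longleftrightarrow> (\<forall>k. \<forall>i<N. \<forall>j<N. (\<Sum>p<N. X k i p * X (-k) p j) = kd i j)"

definition scalars :: "(complex \<Rightarrow> 'A::ring_1) \<Rightarrow> bool" where
  "scalars sc \<longleftrightarrow> sc 1 = 1 \<and> (\<forall>x y. sc (x + y) = sc x + sc y) \<and> (\<forall>x y. sc (x * y) = sc x * sc y)
     \<and> (\<forall>c y. sc c * y = y * sc c)"

definition delta_like :: "(real \<Rightarrow> 'A::ring_1) \<Rightarrow> bool" where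
  "delta_like dl \<longleftrightarrow> (\<forall>x. x \<noteq> 0 \<longrightarrow> dl x = 0) \<and> (\<forall>x. dl (-x) = dl x) \<and> (\<forall>x y. dl x * y = y * dl x)"

definition rel_aa :: "nat \<Rightarrow> (real \<Rightarrow> real \<Rightarrow> nat \<Rightarrow> nat \<Rightarrow> nat \<Rightarrow> nat \<Rightarrow> 'A::ring_1)
   \<Rightarrow> (nat \<Rightarrow> real \<Rightarrow> 'A) \<Rightarrow> bool" where
  "rel_aa N Rs x \<longleftrightarrow> (\<forall>k1 k2. \<forall>i<N. \<forall>j<N.
     x i k1 * x j k2 = (\<Sum>p<N. \<Sum>q<N. Rs k2 k1 j i q p * x q k2 * x p k1))"

definition rel_dd :: "nat \<Rightarrow> (real \<Rightarrow> real \<Rightarrow> nat \<Rightarrow> nat \<Rightarrow> nat \<Rightarrow> nat \<Rightarrow> 'A::ring_1)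
   \<Rightarrow> (nat \<Rightarrow> real \<Rightarrow> 'A) \<Rightarrow> bool" where
  "rel_dd N Rs y \<longleftrightarrow> (\<forall>k1 k2. \<forall>i<N. \<forall>j<N.
     y i k1 * y j k2 = (\<Sum>p<N. \<Sum>q<N. y q k2 * y p k1 * Rs k2 k1 q p j i))"

definition rel_ad :: "nat \<Rightarrow> (real \<Rightarrow> real \<Rightarrow> nat \<Rightarrow> nat \<Rightarrow> nat \<Rightarrow> nat \<Rightarrow> 'A::ring_1)
   \<Rightarrow> (nat \<Rightarrow> real \<Rightarrow> 'A) \<Rightarrow> (nat \<Rightarrow> real \<Rightarrow> 'A) \<Rightarrow> (real \<Rightarrow> real \<Rightarrow> nat \<Rightarrow> nat \<Rightarrow> 'A) \<Rightarrow> bool" where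
  "rel_ad N Rs x y D \<longleftrightarrow> (\<forall>k1 k2. \<forall>i<N. \<forall>j<N.
     x i k1 * y j k2 = (\<Sum>p<N. \<Sum>q<N. y q k2 * Rs k1 k2 i q p j * x p k1) + D k1 k2 i j)"

definition well_bred :: "nat \<Rightarrow> (real \<Rightarrow> real \<Rightarrow> nat \<Rightarrow> nat \<Rightarrow> nat \<Rightarrow> nat \<Rightarrow> 'A::ring_1)
   \<Rightarrow> (nat \<Rightarrow> real \<Rightarrow> 'A) \<Rightarrow> (nat \<Rightarrow> real \<Rightarrow> 'A) \<Rightarrow> (real \<Rightarrow> nat \<Rightarrow> nat \<Rightarrow> 'A) \<Rightarrow> bool" where
  "well_bred N Rs a ad T \<longleftrightarrow>
    (\<forall>k1 k2. \<forall>i<N. \<forall>j<N. \<forall>r<N.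
        T k1 i r * a j k2 = (\<Sum>p<N. \<Sum>q<N. Rs k2 k1 j i q p * a q k2 * T k1 p r)) \<and>
    (\<forall>k1 k2. \<forall>i<N. \<forall>j<N. \<forall>r<N.
        T k1 i r * ad j k2 = (\<Sum>p<N. \<Sum>q<N. ad q k2 * Rs k1 k2 i q p j * T k1 p r)) \<and>
    (\<forall>k1 k2. eq2 N (mul2 N (Rs k1 k2) (mul2 N (op_1 (T k1)) (op_2 (T k2))))
                  (mul2 N (mul2 N (op_2 (T k2)) (op_1 (T k1))) (Rs k1 k2)))"

definition is_inverse :: "nat \<Rightarrow> (real \<Rightarrow> nat \<Rightarrow> nat \<Rightarrow> 'A::ring_1) \<Rightarrow> (real \<Rightarrow> nat \<Rightarrow> nat \<Rightarrow> 'A) \<Rightarrow> bool" where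
  "is_inverse N T Tinv \<longleftrightarrow> (\<forall>k. \<forall>i<N. \<forall>j<N.
     (\<Sum>p<N. T k i p * Tinv k p j) = kd i j \<and> (\<Sum>p<N. Tinv k i p * T k p j) = kd i j)"

definition bmat :: "nat \<Rightarrow> (complex \<Rightarrow> 'A::ring_1) \<Rightarrow> (real \<Rightarrow> nat \<Rightarrow> nat \<Rightarrow> 'A) \<Rightarrow> (real \<Rightarrow> nat \<Rightarrow> nat \<Rightarrow> 'A)
   \<Rightarrow> (real \<Rightarrow> nat \<Rightarrow> nat \<Rightarrow> complex) \<Rightarrow> real \<Rightarrow> nat \<Rightarrow> nat \<Rightarrow> 'A" where
  "bmat N sc T Tinv B k i j = (\<Sum>p<N. \<Sum>q<N. T k i p * sc (B k p q) * Tinv (-k) q j)"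

definition a_tilde :: "nat \<Rightarrow> (complex \<Rightarrow> 'A::ring_1) \<Rightarrow> (nat \<Rightarrow> real \<Rightarrow> 'A) \<Rightarrow> (real \<Rightarrow> nat \<Rightarrow> nat \<Rightarrow> 'A)
   \<Rightarrow> nat \<Rightarrow> real \<Rightarrow> 'A" where
  "a_tilde N sc a b i k = sc (1/2) * (a i k + (\<Sum>p<N. b k i p * a p (-k)))"

definition ad_tilde :: "nat \<Rightarrow> (complex \<Rightarrow> 'A::ring_1) \<Rightarrow> (nat \<Rightarrow> real \<Rightarrow> 'A) \<Rightarrow> (real \<Rightarrow> nat \<Rightarrow> nat \<Rightarrow> 'A)
   \<Rightarrow> nat \<Rightarrow> real \<Rightarrow> 'A" where
  "ad_tilde N sc ad b j k = sc (1/2) * (ad j k + (\<Sum>p<N. ad p (-k) * b (-k) p j))"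

end

theory Submission
  imports Defs "HOL-Library.Function_Algebras"
begin

text \<open>
Conjugation by the well-bred vertex operator transports everything from B to b(k) = T(k) B(k) T(-k)^-1.
The relations T1 a2 = R21 a2 T1, T1 a^dag_2 = a^dag_2 R12 T1 and R12 T1 T2 = T2 T1 R12 say that T
exchanges with a, a^dag and with itself exactly as a does, while the numerical matrix B commutes with
all entries. Hence b inherits the reflection equation and b(k) b(-k) = I from B, and a, a^dag exchange
with b through two R-matrices: a1 b2 = R21 b2 R'12 a1 and b1 a^dag_2 = a^dag_2 R12 b1 R'21.
Expanding the tilde generators bilinearly, each boundary relation splits into four cross terms, and
each cross term follows from the ZF relations, these exchange relations, the reflection equation for b
and unitarity. In the mixed relation the contributions of delta(k1 - k2) and delta(k1 + k2) each occur
twice; since delta(k1 + k2) localizes at k2 = -k1 they add up to (delta12 + b12)/2.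
\<close>

section \<open>Operators on C^N (x) C^N with noncommuting entries\<close>

type_synonym 'a mat = "nat \<Rightarrow> nat \<Rightarrow> 'a"
type_synonym 'a op2 = "nat \<Rightarrow> nat \<Rightarrow> nat \<Rightarrow> nat \<Rightarrow> 'a"

lemma if_0_mult: "(if P then x else 0) * (y :: 'a::mult_zero) = (if P then x * y else 0)"
  by simp

lemma mult_if_0: "(y :: 'a::mult_zero) * (if P then x else 0) = (if P then y * x else 0)"
  by simp

lemma sum_if_0: "(\<Sum>s\<in>A. if P then f s else 0) = (if P then (\<Sum>s\<in>A. f s) else (0 :: 'a::comm_monoid_add))"
  by simp

lemma if_0_add: "(if P then u else 0) + (if P then v else 0) = (if P then u + v else (0 :: 'a::monoid_add))"
  by simp

lemmas if_0_simps = if_0_mult mult_if_0 sum_if_0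

lemma mul2_apply_pairs:
  "mul2 N X Y i j p q = (\<Sum>(r, s)\<in>{..<N} \<times> {..<N}. X i j r s * Y r s p q)"
  unfolding mul2_def by (simp add: sum.cartesian_product)

lemma mul2_assoc: "mul2 N (mul2 N X Y) Z = mul2 N X (mul2 N Y (Z :: 'a::semiring_0 op2))"
proof (intro ext)
  fix i j p q
  have "mul2 N (mul2 N X Y) Z i j p q
      = (\<Sum>u\<in>{..<N} \<times> {..<N}. \<Sum>v\<in>{..<N} \<times> {..<N}.
           X i j (fst v) (snd v) * Y (fst v) (snd v) (fst u) (snd u) * Z (fst u) (snd u) p q)"
    by (simp add: mul2_apply_pairs sum_distrib_right case_prod_beta)
  also have "\<dots> = mul2 N X (mul2 N Y Z) i j p q"
    by (subst sum.swap) (simp add: mul2_apply_pairs sum_distrib_left case_prod_beta mult.assoc)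
  finally show "mul2 N (mul2 N X Y) Z i j p q = mul2 N X (mul2 N Y Z) i j p q" .
qed

lemma mul2_tail: "mul2 N X Y = Z \<Longrightarrow> mul2 N X (mul2 N Y W) = mul2 N Z (W :: 'a::semiring_0 op2)"
  by (metis mul2_assoc)

lemma mul2_add_left: "mul2 N (X + Y) Z = mul2 N X Z + mul2 N Y (Z :: 'a::semiring_0 op2)"
  unfolding mul2_def by (intro ext) (simp add: distrib_right sum.distrib)

lemma mul2_add_right: "mul2 N Z (X + Y) = mul2 N Z X + mul2 N Z (Y :: 'a::semiring_0 op2)"
  unfolding mul2_def by (intro ext) (simp add: distrib_left sum.distrib)

definition scale2 :: "'a::times \<Rightarrow> 'a op2 \<Rightarrow> 'a op2" where
  "scale2 c X = (\<lambda>i j p q. c * X i j p q)"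

lemma scale2_add: "scale2 c (X + Y) = scale2 c X + scale2 c (Y :: 'a::semiring_0 op2)"
  unfolding scale2_def by (simp add: distrib_left fun_eq_iff)

lemma mul2_scale2_left: "mul2 N (scale2 c X) Z = scale2 c (mul2 N X (Z :: 'a::semiring_0 op2))"
  unfolding scale2_def mul2_def by (intro ext) (simp add: sum_distrib_left mult.assoc)

lemma mul2_scale2_right:
  assumes "\<And>y. c * y = y * c"
  shows "mul2 N Z (scale2 c X) = scale2 c (mul2 N Z (X :: 'a::semiring_0 op2))"
proof -
  have "z * (c * x) = c * (z * x)" for z x
    by (metis assms mult.assoc)
  then show ?thesis
    unfolding scale2_def mul2_def by (intro ext) (simp add: sum_distrib_left)
qed

text \<open>mul2 N only sums over indices below N, so one2 N is a two-sided unit only for operators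
vanishing outside that range; every operator built below is truncated in this sense.\<close>

definition trunc2 :: "nat \<Rightarrow> 'a::zero op2 \<Rightarrow> 'a op2" where
  "trunc2 N X = (\<lambda>i j p q. if i < N \<and> j < N \<and> p < N \<and> q < N then X i j p q else 0)"

definition truncated :: "nat \<Rightarrow> 'a::zero op2 \<Rightarrow> bool" where
  "truncated N X \<longleftrightarrow> trunc2 N X = X"

lemma trunc2_apply:
  "trunc2 N X i j p q = (if i < N \<and> j < N \<and> p < N \<and> q < N then X i j p q else 0)"
  unfolding trunc2_def ..

lemma eq2_iff_trunc2: "eq2 N X Y \<longleftrightarrow> trunc2 N X = trunc2 N Y"
  unfolding eq2_def trunc2_def fun_eq_iff by auto

lemma truncatedI:
  "(\<And>i j p q. \<not> (i < N \<and> j < N \<and> p < N \<and> q < N) \<Longrightarrow> X i j p q = 0) \<Longrightarrow> truncated N X"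
  unfolding truncated_def trunc2_def by (intro ext) auto

lemma truncatedD:
  assumes "truncated N X" and "\<not> (i < N \<and> j < N \<and> p < N \<and> q < N)"
  shows "X i j p q = 0"
proof -
  have "X i j p q = trunc2 N X i j p q"
    using assms(1) by (simp add: truncated_def)
  then show ?thesis
    using assms(2) by (simp add: trunc2_def)
qed

lemma truncated_trunc2 [simp]: "truncated N (trunc2 N X)"
  unfolding truncated_def trunc2_def by (intro ext) simp

lemma trunc2_mul2: "trunc2 N (mul2 N X Y) = mul2 N (trunc2 N X) (trunc2 N (Y :: 'a::semiring_0 op2))"
  unfolding trunc2_def mul2_def by (intro ext) (auto intro!: sum.cong)

lemma truncated_mul2 [simp]:
  "truncated N X \<Longrightarrow> truncated N Y \<Longrightarrow> truncated N (mul2 N X (Y :: 'a::semiring_0 op2))"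
  unfolding truncated_def by (simp add: trunc2_mul2)

lemma truncated_add [simp]:
  "truncated N X \<Longrightarrow> truncated N Y \<Longrightarrow> truncated N (X + (Y :: 'a::monoid_add op2))"
  by (rule truncatedI) (simp add: truncatedD)

lemma truncated_scale2 [simp]: "truncated N X \<Longrightarrow> truncated N (scale2 c (X :: 'a::mult_zero op2))"
  by (rule truncatedI) (simp add: scale2_def truncatedD)

definition one2 :: "nat \<Rightarrow> 'a::semiring_1 op2" where
  "one2 N = trunc2 N id2"

lemma truncated_one2 [simp]: "truncated N (one2 N)"
  unfolding one2_def by simp

lemma one2_mul2: "truncated N X \<Longrightarrow> mul2 N (one2 N) X = (X :: 'a::semiring_1 op2)"
proof (intro ext)
  fix i j p q
  assume "truncated N X"
  have "mul2 N (one2 N) X i j p q = (if i < N \<and> j < N then X i j p q else 0)"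
    unfolding mul2_def one2_def trunc2_def id2_def kd_def by (simp add: if_0_simps)
  then show "mul2 N (one2 N) X i j p q = X i j p q"
    using truncatedD[OF \<open>truncated N X\<close>] by auto
qed

lemma mul2_one2: "truncated N X \<Longrightarrow> mul2 N X (one2 N) = (X :: 'a::semiring_1 op2)"
proof (intro ext)
  fix i j p q
  assume "truncated N X"
  have "mul2 N X (one2 N) i j p q = (if p < N \<and> q < N then X i j p q else 0)"
    unfolding mul2_def one2_def trunc2_def id2_def kd_def by (simp add: if_0_simps)
  then show "mul2 N X (one2 N) i j p q = X i j p q"
    using truncatedD[OF \<open>truncated N X\<close>] by auto
qed

lemma mul2_cancel_left:
  "mul2 N X Y = one2 N \<Longrightarrow> truncated N W \<Longrightarrow> mul2 N X (mul2 N Y W) = (W :: 'a::semiring_1 op2)"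
  by (metis mul2_assoc one2_mul2)

definition emb1 :: "nat \<Rightarrow> 'a::zero mat \<Rightarrow> 'a op2" where
  "emb1 N M = trunc2 N (op_1 M)"

definition emb2 :: "nat \<Rightarrow> 'a::zero mat \<Rightarrow> 'a op2" where
  "emb2 N M = trunc2 N (op_2 M)"

definition matmul :: "nat \<Rightarrow> 'a::semiring_0 mat \<Rightarrow> 'a mat \<Rightarrow> 'a mat" where
  "matmul N X Y = (\<lambda>i p. \<Sum>r<N. X i r * Y r p)"

lemma truncated_emb1 [simp]: "truncated N (emb1 N M)"
  unfolding emb1_def by simp

lemma truncated_emb2 [simp]: "truncated N (emb2 N M)"
  unfolding emb2_def by simp

lemma emb1_matmul: "emb1 N (matmul N X Y) = mul2 N (emb1 N X) (emb1 N (Y :: 'a::semiring_0 mat))"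
  unfolding mul2_def emb1_def trunc2_def op_1_def matmul_def by (intro ext) (simp add: if_0_simps)

lemma emb2_matmul: "emb2 N (matmul N X Y) = mul2 N (emb2 N X) (emb2 N (Y :: 'a::semiring_0 mat))"
  unfolding mul2_def emb2_def trunc2_def op_2_def matmul_def by (intro ext) (simp add: if_0_simps)

lemma emb1_eq_one2:
  "(\<And>i j. i < N \<Longrightarrow> j < N \<Longrightarrow> X i j = kd i j) \<Longrightarrow> emb1 N X = (one2 N :: 'a::semiring_1 op2)"
  unfolding emb1_def one2_def trunc2_def op_1_def id2_def by (intro ext) (auto simp: kd_def)

lemma emb2_eq_one2:
  "(\<And>i j. i < N \<Longrightarrow> j < N \<Longrightarrow> X i j = kd i j) \<Longrightarrow> emb2 N X = (one2 N :: 'a::semiring_1 op2)"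
  unfolding emb2_def one2_def trunc2_def op_2_def id2_def by (intro ext) (auto simp: kd_def)

lemma emb1_scale: "emb1 N (\<lambda>i p. c * X i p) = scale2 c (emb1 N (X :: 'a::mult_zero mat))"
  unfolding emb1_def trunc2_def op_1_def scale2_def by (intro ext) simp

lemma emb2_scale: "emb2 N (\<lambda>i p. c * X i p) = scale2 c (emb2 N (X :: 'a::mult_zero mat))"
  unfolding emb2_def trunc2_def op_2_def scale2_def by (intro ext) simp

lemma emb1_add: "emb1 N (\<lambda>i p. X i p + Y i p) = emb1 N X + emb1 N (Y :: 'a::monoid_add mat)"
  unfolding emb1_def trunc2_def op_1_def plus_fun_def by (simp only: if_0_add)

lemma emb2_add: "emb2 N (\<lambda>i p. X i p + Y i p) = emb2 N X + emb2 N (Y :: 'a::monoid_add mat)"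
  unfolding emb2_def trunc2_def op_2_def plus_fun_def by (simp only: if_0_add)

lemma mul2_emb1_emb2_apply:
  "mul2 N (emb1 N X) (emb2 N Y) i j p q
     = (if i < N \<and> j < N \<and> p < N \<and> q < N then X i p * (Y j q :: 'a::semiring_0) else 0)"
  unfolding mul2_def emb1_def emb2_def trunc2_def op_1_def op_2_def by (simp add: if_0_simps)

lemma mul2_emb2_emb1_apply:
  "mul2 N (emb2 N Y) (emb1 N X) i j p q
     = (if i < N \<and> j < N \<and> p < N \<and> q < N then Y j q * (X i p :: 'a::semiring_0) else 0)"
  unfolding mul2_def emb1_def emb2_def trunc2_def op_1_def op_2_def by (simp add: if_0_simps)

lemma mul2_emb1_left_apply:
  "mul2 N (emb1 N X) Z i j p q = (if i < N \<and> j < N then \<Sum>r<N. X i r * (Z r j p q :: 'a::semiring_0) else 0)"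
  unfolding mul2_def emb1_def trunc2_def op_1_def by (simp add: if_0_simps)

lemma mul2_emb2_left_apply:
  "mul2 N (emb2 N X) Z i j p q = (if i < N \<and> j < N then \<Sum>s<N. X j s * (Z i s p q :: 'a::semiring_0) else 0)"
  unfolding mul2_def emb2_def trunc2_def op_2_def by (simp add: if_0_simps)

lemma mul2_emb1_right_apply:
  "mul2 N Z (emb1 N X) i j p q = (if p < N \<and> q < N then \<Sum>r<N. Z i j r q * (X r p :: 'a::semiring_0) else 0)"
  unfolding mul2_def emb1_def trunc2_def op_1_def by (simp add: if_0_simps)

lemma mul2_emb2_right_apply:
  "mul2 N Z (emb2 N X) i j p q = (if p < N \<and> q < N then \<Sum>s<N. Z i j p s * (X s q :: 'a::semiring_0) else 0)"
  unfolding mul2_def emb2_def trunc2_def op_2_def by (simp add: if_0_simps)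

lemma mul2_trunc2_left_apply:
  "mul2 N (trunc2 N X) Z i j p q
     = (if i < N \<and> j < N then \<Sum>r<N. \<Sum>s<N. X i j r s * (Z r s p q :: 'a::semiring_0) else 0)"
  unfolding mul2_def trunc2_def by (simp add: if_0_simps)

lemma emb1_emb2_commute:
  assumes "\<And>i p j q. i < N \<Longrightarrow> p < N \<Longrightarrow> j < N \<Longrightarrow> q < N \<Longrightarrow> X i p * Y j q = Y j q * X i p"
  shows "mul2 N (emb1 N X) (emb2 N Y) = mul2 N (emb2 N Y) (emb1 N (X :: 'a::semiring_0 mat))"
  by (intro ext) (simp add: mul2_emb1_emb2_apply mul2_emb2_emb1_apply assms)

definition flip2 :: "'a op2 \<Rightarrow> 'a op2" where
  "flip2 X = (\<lambda>i j p q. X j i q p)"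

lemma flip2_flip2 [simp]: "flip2 (flip2 X) = X"
  unfolding flip2_def by simp

lemma flip2_mul2: "flip2 (mul2 N X Y) = mul2 N (flip2 X) (flip2 (Y :: 'a::semiring_0 op2))"
  unfolding flip2_def mul2_def by (intro ext) (rule sum.swap)

lemma flip2_emb1 [simp]: "flip2 (emb1 N X) = emb2 N X"
  unfolding flip2_def emb1_def emb2_def trunc2_def op_1_def op_2_def by (intro ext) auto

lemma flip2_emb2 [simp]: "flip2 (emb2 N X) = emb1 N X"
  unfolding flip2_def emb1_def emb2_def trunc2_def op_1_def op_2_def by (intro ext) auto

lemma flip2_one2 [simp]: "flip2 (one2 N) = (one2 N :: 'a::semiring_1 op2)"
  unfolding flip2_def one2_def trunc2_def id2_def by (intro ext) (auto simp: kd_def)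

lemma truncated_flip2 [simp]: "truncated N X \<Longrightarrow> truncated N (flip2 X)"
  unfolding flip2_def by (rule truncatedI, rule truncatedD) auto

lemma flip2_eq: "X = Y \<Longrightarrow> flip2 X = flip2 Y"
  by simp

section \<open>Exchange relations of the ZF generators with b\<close>

text \<open>A column vector v is encoded as the matrix whose 0-th column is v (a row vector as the matrix
whose 0-th row is v). Then a1, a2, a^dag_1, ... become operators on C^N (x) C^N, every relation of the
paper is an operator identity, and its components are read off at index 0, which needs N \<ge> 1.\<close>

definition colmat :: "(nat \<Rightarrow> 'a::zero) \<Rightarrow> 'a mat" where
  "colmat v = (\<lambda>i p. if p = 0 then v i else 0)"

definition rowmat :: "(nat \<Rightarrow> 'a::zero) \<Rightarrow> 'a mat" where
  "rowmat v = (\<lambda>p j. if p = 0 then v j else 0)"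

locale zf_boundary =
  fixes N :: nat
    and R :: "real \<Rightarrow> real \<Rightarrow> nat \<Rightarrow> nat \<Rightarrow> nat \<Rightarrow> nat \<Rightarrow> complex"
    and sc :: "complex \<Rightarrow> 'A::ring_1"
    and dl :: "real \<Rightarrow> 'A"
    and a ad :: "nat \<Rightarrow> real \<Rightarrow> 'A"
    and T Tinv :: "real \<Rightarrow> nat \<Rightarrow> nat \<Rightarrow> 'A"
    and B :: "real \<Rightarrow> nat \<Rightarrow> nat \<Rightarrow> complex"
  assumes N_pos: "N \<ge> 1"
    and R_unitary: "unitary_R N R"
    and sc_scalars: "scalars sc"
    and dl_delta: "delta_like dl"
    and a_a: "rel_aa N (\<lambda>x y i j p q. sc (R x y i j p q)) a"
    and ad_ad: "rel_dd N (\<lambda>x y i j p q. sc (R x y i j p q)) ad"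
    and a_ad: "rel_ad N (\<lambda>x y i j p q. sc (R x y i j p q)) a ad (\<lambda>k1 k2 i j. dl (k1 - k2) * kd i j)"
    and T_well_bred: "well_bred N (\<lambda>x y i j p q. sc (R x y i j p q)) a ad T"
    and T_Tinv: "is_inverse N T Tinv"
    and B_reflection: "refl_eq N R B"
    and B_inv_pair: "inv_pair N B"
begin

abbreviation Rs where "Rs \<equiv> \<lambda>x y i j p q. sc (R x y i j p q)"
abbreviation mul (infixr "\<odot>" 70) where "X \<odot> Y \<equiv> mul2 N X Y"
abbreviation I :: "'A op2" where "I \<equiv> one2 N"

lemma sc_add: "sc (x + y) = sc x + sc y"
  using sc_scalars unfolding scalars_def by blast

lemma sc_0 [simp]: "sc 0 = 0"
  using sc_add[of 0 0] by simp

lemma sc_1 [simp]: "sc 1 = 1"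
  using sc_scalars unfolding scalars_def by blast

lemma sc_mult: "sc (x * y) = sc x * sc y"
  using sc_scalars unfolding scalars_def by blast

lemma sc_commute: "sc c * y = y * sc c"
  using sc_scalars unfolding scalars_def by blast

lemma sc_sum: "sc (\<Sum>x\<in>A. f x) = (\<Sum>x\<in>A. sc (f x))"
  by (induction A rule: infinite_finite_induct) (auto simp: sc_add)

lemma sc_kd [simp]: "sc (kd i j) = kd i j"
  using sc_scalars unfolding scalars_def kd_def by simp

lemma dl_commute: "dl x * y = y * dl x"
  using dl_delta unfolding delta_like_def by blast

lemma dl_eq_0: "x \<noteq> 0 \<Longrightarrow> dl x = 0"
  using dl_delta unfolding delta_like_def by blast

lemma dl_minus: "dl (- x) = dl x"
  using dl_delta unfolding delta_like_def by blast

definition lift :: "complex op2 \<Rightarrow> 'A op2" where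
  "lift X = (\<lambda>i j p q. sc (X i j p q))"

lemma lift_mul2: "lift (mul2 N X Y) = lift X \<odot> lift Y"
  unfolding lift_def mul2_def by (simp add: sc_sum sc_mult)

lemma lift_eq2: "eq2 N X Y \<Longrightarrow> trunc2 N (lift X) = trunc2 N (lift Y)"
  unfolding eq2_def lift_def trunc2_def by (intro ext) auto

definition R12 :: "real \<Rightarrow> real \<Rightarrow> 'A op2" where
  "R12 x y = trunc2 N (\<lambda>i j p q. sc (R x y i j p q))"

abbreviation R21 :: "real \<Rightarrow> real \<Rightarrow> 'A op2" where
  "R21 x y \<equiv> flip2 (R12 x y)"

lemma truncated_R12 [simp]: "truncated N (R12 x y)"
  unfolding R12_def by simp

lemma R12_apply:
  "R12 x y i j p q = (if i < N \<and> j < N \<and> p < N \<and> q < N then sc (R x y i j p q) else 0)"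
  unfolding R12_def trunc2_apply ..

lemma R21_eq: "R21 x y = trunc2 N (\<lambda>i j p q. sc (R x y j i q p))"
  unfolding R12_def flip2_def trunc2_def by (intro ext) auto

lemma trunc2_lift_R: "trunc2 N (lift (R x y)) = R12 x y"
  unfolding R12_def lift_def ..

lemma trunc2_lift_op21: "trunc2 N (lift (op21 R x y)) = R21 x y"
  unfolding R21_eq lift_def op21_def ..

lemma R12_R21_inverse: "R12 x y \<odot> R21 y x = I"
proof -
  have "trunc2 N (lift (mul2 N (R x y) (op21 R y x))) = trunc2 N (lift id2)"
    using R_unitary lift_eq2 unfolding unitary_R_def by blast
  moreover have "lift id2 = id2"
    unfolding lift_def id2_def by (intro ext) (simp add: kd_def)
  ultimately show ?thesis
    by (simp add: lift_mul2 trunc2_mul2 trunc2_lift_R trunc2_lift_op21 one2_def)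
qed

lemma R21_R12_inverse: "R21 x y \<odot> R12 y x = I"
  using flip2_eq[OF R12_R21_inverse[of x y]] by (simp add: flip2_mul2)

lemmas R12_R21_cancel = mul2_cancel_left[OF R12_R21_inverse]
lemmas R21_R12_cancel = mul2_cancel_left[OF R21_R12_inverse]

abbreviation a1 where "a1 x \<equiv> emb1 N (colmat (\<lambda>i. a i x))"
abbreviation a2 where "a2 x \<equiv> emb2 N (colmat (\<lambda>i. a i x))"
abbreviation ad1 where "ad1 x \<equiv> emb1 N (rowmat (\<lambda>j. ad j x))"
abbreviation ad2 where "ad2 x \<equiv> emb2 N (rowmat (\<lambda>j. ad j x))"
abbreviation T1 where "T1 x \<equiv> emb1 N (T x)"
abbreviation T2 where "T2 x \<equiv> emb2 N (T x)"
abbreviation Ti1 where "Ti1 x \<equiv> emb1 N (Tinv x)"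
abbreviation Ti2 where "Ti2 x \<equiv> emb2 N (Tinv x)"
abbreviation B1 where "B1 x \<equiv> emb1 N (\<lambda>i j. sc (B x i j))"
abbreviation B2 where "B2 x \<equiv> emb2 N (\<lambda>i j. sc (B x i j))"
abbreviation b where "b \<equiv> bmat N sc T Tinv B"
abbreviation b1 where "b1 x \<equiv> emb1 N (b x)"
abbreviation b2 where "b2 x \<equiv> emb2 N (b x)"

text \<open>contr12 = sum_i e_i e_0^dag (x) e_0 e_i^dag; the term delta12 of the paper is dl (k1 - k2) times it.\<close>

definition contr12 :: "'A op2" where
  "contr12 = trunc2 N (\<lambda>i j p q. if j = 0 \<and> p = 0 then kd i q else 0)"

lemma truncated_contr12 [simp]: "truncated N contr12"
  unfolding contr12_def by simp

lemma a1_a2: "a1 x \<odot> a2 y = R21 y x \<odot> a2 y \<odot> a1 x"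
proof (intro ext)
  fix i j p q
  show "(a1 x \<odot> a2 y) i j p q = (R21 y x \<odot> a2 y \<odot> a1 x) i j p q"
  proof (cases "i < N \<and> j < N \<and> p = 0 \<and> q = 0")
    case True
    then show ?thesis
      using a_a[unfolded rel_aa_def, rule_format, of i j x y] N_pos
      by (simp add: mul2_emb1_emb2_apply mul2_emb2_emb1_apply mul2_trunc2_left_apply R21_eq
          colmat_def mult.assoc)
  next
    case False
    then show ?thesis
      by (auto simp: mul2_emb1_emb2_apply mul2_emb2_emb1_apply mul2_trunc2_left_apply R21_eq
          colmat_def)
  qed
qed

lemma ad1_ad2: "ad1 x \<odot> ad2 y = ad2 y \<odot> ad1 x \<odot> R21 y x"
proof (intro ext)
  fix i j p q
  show "(ad1 x \<odot> ad2 y) i j p q = (ad2 y \<odot> ad1 x \<odot> R21 y x) i j p q"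
  proof (cases "i = 0 \<and> j = 0 \<and> p < N \<and> q < N")
    case True
    have "(\<Sum>s<N. ad s y * (\<Sum>r<N. ad r x * sc (R y x s r q p)))
        = (\<Sum>r<N. \<Sum>s<N. ad s y * ad r x * sc (R y x s r q p))"
      by (subst sum.swap) (simp add: sum_distrib_left mult.assoc)
    then show ?thesis
      using True ad_ad[unfolded rel_dd_def, rule_format, of p q x y] N_pos
      unfolding mul2_emb1_emb2_apply by (simp add: mul2_emb1_left_apply mul2_emb2_left_apply R21_eq
          rowmat_def trunc2_def)
  next
    case False
    then show ?thesis
      unfolding mul2_emb1_emb2_apply
      by (auto simp: mul2_emb1_left_apply mul2_emb2_left_apply R21_eq rowmat_def trunc2_def)
  qed
qed

lemma a1_ad2: "a1 x \<odot> ad2 y = ad2 y \<odot> R12 x y \<odot> a1 x + scale2 (dl (x - y)) contr12"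
proof (intro ext)
  fix i j p q
  show "(a1 x \<odot> ad2 y) i j p q = (ad2 y \<odot> R12 x y \<odot> a1 x + scale2 (dl (x - y)) contr12) i j p q"
  proof (cases "i < N \<and> j = 0 \<and> p = 0 \<and> q < N")
    case True
    have "(\<Sum>s<N. ad s y * (\<Sum>r<N. sc (R x y i s r q) * a r x))
        = (\<Sum>r<N. \<Sum>s<N. ad s y * sc (R x y i s r q) * a r x)"
      by (subst sum.swap) (simp add: sum_distrib_left mult.assoc)
    then show ?thesis
      using True a_ad[unfolded rel_ad_def, rule_format, of i q x y] N_pos
      by (simp add: mul2_emb1_emb2_apply mul2_emb1_right_apply mul2_emb2_left_apply R12_def
          colmat_def rowmat_def trunc2_def scale2_def contr12_def)
  next
    case False
    then show ?thesis
      by (auto simp: mul2_emb1_emb2_apply mul2_emb1_right_apply mul2_emb2_left_apply R12_def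
          colmat_def rowmat_def trunc2_def scale2_def contr12_def)
  qed
qed

lemma T1_a2: "T1 x \<odot> a2 y = R21 y x \<odot> a2 y \<odot> T1 x"
proof (intro ext)
  fix i j p q
  show "(T1 x \<odot> a2 y) i j p q = (R21 y x \<odot> a2 y \<odot> T1 x) i j p q"
  proof (cases "i < N \<and> j < N \<and> p < N \<and> q = 0")
    case True
    then show ?thesis
      using T_well_bred[unfolded well_bred_def] N_pos
      by (simp add: mul2_emb1_emb2_apply mul2_emb2_emb1_apply mul2_trunc2_left_apply R21_eq
          colmat_def mult.assoc)
  next
    case False
    then show ?thesis
      by (auto simp: mul2_emb1_emb2_apply mul2_emb2_emb1_apply mul2_trunc2_left_apply R21_eq
          colmat_def)
  qed
qed

lemma T1_ad2: "T1 x \<odot> ad2 y = ad2 y \<odot> R12 x y \<odot> T1 x"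
proof (intro ext)
  fix i j p q
  show "(T1 x \<odot> ad2 y) i j p q = (ad2 y \<odot> R12 x y \<odot> T1 x) i j p q"
  proof (cases "i < N \<and> j = 0 \<and> p < N \<and> q < N")
    case True
    have "(\<Sum>s<N. ad s y * (\<Sum>r<N. sc (R x y i s r q) * T x r p))
        = (\<Sum>r<N. \<Sum>s<N. ad s y * sc (R x y i s r q) * T x r p)"
      by (subst sum.swap) (simp add: sum_distrib_left mult.assoc)
    then show ?thesis
      using True T_well_bred[unfolded well_bred_def] N_pos
      by (simp add: mul2_emb1_emb2_apply mul2_emb1_right_apply mul2_emb2_left_apply R12_def
          rowmat_def trunc2_def)
  next
    case False
    then show ?thesis
      by (auto simp: mul2_emb1_emb2_apply mul2_emb1_right_apply mul2_emb2_left_apply R12_def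
          rowmat_def trunc2_def)
  qed
qed

lemma R12_T1_T2: "R12 x y \<odot> T1 x \<odot> T2 y = T2 y \<odot> T1 x \<odot> R12 x y"
proof -
  have "eq2 N (mul2 N (\<lambda>i j p q. sc (R x y i j p q)) (mul2 N (op_1 (T x)) (op_2 (T y))))
              (mul2 N (mul2 N (op_2 (T y)) (op_1 (T x))) (\<lambda>i j p q. sc (R x y i j p q)))"
    using T_well_bred unfolding well_bred_def by blast
  then show ?thesis
    unfolding eq2_iff_trunc2
    by (simp add: trunc2_mul2 mul2_assoc flip: R12_def emb1_def emb2_def)
qed

lemma R21_T2_T1: "R21 x y \<odot> T2 x \<odot> T1 y = T1 y \<odot> T2 x \<odot> R21 x y"
  using flip2_eq[OF R12_T1_T2[of x y]] by (simp add: flip2_mul2)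

lemma T1_Tinv1: "T1 x \<odot> Ti1 x = I"
  using T_Tinv unfolding is_inverse_def by (simp add: emb1_eq_one2 matmul_def flip: emb1_matmul)

lemma Tinv1_T1: "Ti1 x \<odot> T1 x = I"
  using T_Tinv unfolding is_inverse_def by (simp add: emb1_eq_one2 matmul_def flip: emb1_matmul)

lemma T2_Tinv2: "T2 x \<odot> Ti2 x = I"
  using T_Tinv unfolding is_inverse_def by (simp add: emb2_eq_one2 matmul_def flip: emb2_matmul)

lemma Tinv2_T2: "Ti2 x \<odot> T2 x = I"
  using T_Tinv unfolding is_inverse_def by (simp add: emb2_eq_one2 matmul_def flip: emb2_matmul)

lemmas T1_Tinv1_cancel = mul2_cancel_left[OF T1_Tinv1]
lemmas Tinv1_T1_cancel = mul2_cancel_left[OF Tinv1_T1]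
lemmas Tinv2_T2_cancel = mul2_cancel_left[OF Tinv2_T2]

lemma B1_B1_inverse: "B1 x \<odot> B1 (- x) = I"
proof -
  have "(\<Sum>p<N. sc (B x i p) * sc (B (- x) p j)) = kd i j" if "i < N" "j < N" for i j
    using B_inv_pair that unfolding inv_pair_def by (simp flip: sc_mult sc_sum)
  then show ?thesis
    by (simp add: emb1_eq_one2 matmul_def flip: emb1_matmul)
qed

lemma reflection_B:
  "R12 x y \<odot> B1 x \<odot> R21 y (- x) \<odot> B2 y = B2 y \<odot> R12 x (- y) \<odot> B1 x \<odot> R21 (- y) (- x)"
proof -
  have "trunc2 N (lift (mul2 N (mul2 N (mul2 N (R x y) (op_1 (B x))) (op21 R y (- x))) (op_2 (B y))))
      = trunc2 N (lift (mul2 N (mul2 N (mul2 N (op_2 (B y)) (R x (- y))) (op_1 (B x))) (op21 R (- y) (- x))))"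
    using B_reflection lift_eq2 unfolding refl_eq_def by blast
  moreover have "trunc2 N (lift (op_1 (B x))) = B1 x" "trunc2 N (lift (op_2 (B y))) = B2 y"
    by (simp_all add: lift_def emb1_def emb2_def op_1_def op_2_def trunc2_def fun_eq_iff)
  ultimately show ?thesis
    by (simp add: lift_mul2 trunc2_mul2 trunc2_lift_R trunc2_lift_op21 mul2_assoc)
qed

lemma B1_commute: "B1 x \<odot> emb2 N Y = emb2 N Y \<odot> B1 x"
  by (rule emb1_emb2_commute) (simp add: sc_commute)

lemma B2_commute: "emb1 N Y \<odot> B2 x = B2 x \<odot> emb1 N Y"
  using emb1_emb2_commute[of N Y "\<lambda>i j. sc (B x i j)"] by (simp add: sc_commute)

lemma bmat_eq: "b x = matmul N (T x) (matmul N (\<lambda>i j. sc (B x i j)) (Tinv (- x)))"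
  unfolding bmat_def matmul_def by (intro ext) (simp add: sum_distrib_left mult.assoc)

lemma b1_eq: "b1 x = T1 x \<odot> B1 x \<odot> Ti1 (- x)"
  by (simp add: bmat_eq emb1_matmul)

lemma b2_eq: "b2 x = T2 x \<odot> B2 x \<odot> Ti2 (- x)"
  by (simp add: bmat_eq emb2_matmul)

lemma T2_a1: "T2 y \<odot> a1 x = R12 x y \<odot> a1 x \<odot> T2 y"
  using flip2_eq[OF T1_a2[of y x]] by (simp add: flip2_mul2)

text \<open>The tail versions, with an arbitrary right factor, rewrite inside right-nested products.\<close>

lemmas T2_a1_tail = T2_a1[THEN mul2_tail, simplified mul2_assoc]
lemmas T1_ad2_tail = T1_ad2[THEN mul2_tail, simplified mul2_assoc]
lemmas R12_T1_T2_tail = R12_T1_T2[THEN mul2_tail, simplified mul2_assoc]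
lemmas R21_T2_T1_tail = R21_T2_T1[THEN mul2_tail, simplified mul2_assoc]

lemma a1_T2: "a1 x \<odot> T2 y = R21 y x \<odot> T2 y \<odot> a1 x"
proof -
  have "R21 y x \<odot> T2 y \<odot> a1 x = R21 y x \<odot> R12 x y \<odot> a1 x \<odot> T2 y"
    by (simp only: T2_a1)
  also have "\<dots> = a1 x \<odot> T2 y"
    by (simp add: R21_R12_cancel)
  finally show ?thesis ..
qed

lemma a1_Tinv2: "a1 x \<odot> Ti2 y = Ti2 y \<odot> R12 x y \<odot> a1 x"
proof -
  have "Ti2 y \<odot> R12 x y \<odot> a1 x = Ti2 y \<odot> R12 x y \<odot> a1 x \<odot> T2 y \<odot> Ti2 y"
    by (simp add: T2_Tinv2 mul2_one2)
  also have "\<dots> = Ti2 y \<odot> T2 y \<odot> a1 x \<odot> Ti2 y"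
    by (simp only: T2_a1_tail)
  also have "\<dots> = a1 x \<odot> Ti2 y"
    by (simp add: Tinv2_T2_cancel)
  finally show ?thesis ..
qed

lemma Tinv1_ad2: "Ti1 x \<odot> ad2 y = ad2 y \<odot> Ti1 x \<odot> R21 y x"
proof -
  have "ad2 y \<odot> Ti1 x \<odot> R21 y x = Ti1 x \<odot> T1 x \<odot> ad2 y \<odot> Ti1 x \<odot> R21 y x"
    by (simp add: Tinv1_T1_cancel)
  also have "\<dots> = Ti1 x \<odot> ad2 y \<odot> R12 x y \<odot> T1 x \<odot> Ti1 x \<odot> R21 y x"
    by (simp only: T1_ad2_tail)
  also have "\<dots> = Ti1 x \<odot> ad2 y"
    by (simp add: T1_Tinv1_cancel R12_R21_inverse mul2_one2)
  finally show ?thesis ..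
qed

lemma Tinv1_R21_T2: "Ti1 x \<odot> R21 y x \<odot> T2 y = T2 y \<odot> R21 y x \<odot> Ti1 x"
proof -
  have "T2 y \<odot> R21 y x \<odot> Ti1 x = Ti1 x \<odot> T1 x \<odot> T2 y \<odot> R21 y x \<odot> Ti1 x"
    by (simp add: Tinv1_T1_cancel)
  also have "\<dots> = Ti1 x \<odot> R21 y x \<odot> T2 y \<odot> T1 x \<odot> Ti1 x"
    by (simp only: R21_T2_T1_tail)
  also have "\<dots> = Ti1 x \<odot> R21 y x \<odot> T2 y"
    by (simp add: T1_Tinv1 mul2_one2)
  finally show ?thesis ..
qed

lemma R21_Tinv1_Tinv2: "R21 y x \<odot> Ti1 x \<odot> Ti2 y = Ti2 y \<odot> Ti1 x \<odot> R21 y x"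
proof -
  have "Ti2 y \<odot> Ti1 x \<odot> R21 y x = Ti2 y \<odot> Ti1 x \<odot> R21 y x \<odot> T2 y \<odot> T1 x \<odot> Ti1 x \<odot> Ti2 y"
    by (simp add: T1_Tinv1_cancel T2_Tinv2 mul2_one2)
  also have "\<dots> = Ti2 y \<odot> Ti1 x \<odot> T1 x \<odot> T2 y \<odot> R21 y x \<odot> Ti1 x \<odot> Ti2 y"
    by (simp only: R21_T2_T1_tail)
  also have "\<dots> = R21 y x \<odot> Ti1 x \<odot> Ti2 y"
    by (simp add: Tinv1_T1_cancel Tinv2_T2_cancel)
  finally show ?thesis ..
qed

lemma T1_R12_Tinv2: "T1 x \<odot> R12 x y \<odot> Ti2 y = Ti2 y \<odot> R12 x y \<odot> T1 x"
proof -
  have "Ti2 y \<odot> R12 x y \<odot> T1 x = Ti2 y \<odot> R12 x y \<odot> T1 x \<odot> T2 y \<odot> Ti2 y"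
    by (simp add: T2_Tinv2 mul2_one2)
  also have "\<dots> = Ti2 y \<odot> T2 y \<odot> T1 x \<odot> R12 x y \<odot> Ti2 y"
    by (simp only: R12_T1_T2_tail)
  also have "\<dots> = T1 x \<odot> R12 x y \<odot> Ti2 y"
    by (simp add: Tinv2_T2_cancel)
  finally show ?thesis ..
qed

lemmas a1_T2_tail = a1_T2[THEN mul2_tail, simplified mul2_assoc]
lemmas Tinv1_R21_T2_tail = Tinv1_R21_T2[THEN mul2_tail, simplified mul2_assoc]
lemmas T1_R12_Tinv2_tail = T1_R12_Tinv2[THEN mul2_tail, simplified mul2_assoc]
lemmas reflection_B_tail = reflection_B[THEN mul2_tail, simplified mul2_assoc]
lemmas B1_commute_tail = B1_commute[THEN mul2_tail, simplified mul2_assoc]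
lemmas B2_commute_tail = B2_commute[THEN mul2_tail, simplified mul2_assoc]

lemma a1_b2: "a1 x \<odot> b2 y = R21 y x \<odot> b2 y \<odot> R12 x (- y) \<odot> a1 x"
proof -
  have "a1 x \<odot> b2 y = a1 x \<odot> T2 y \<odot> B2 y \<odot> Ti2 (- y)"
    by (simp only: b2_eq)
  also have "\<dots> = R21 y x \<odot> T2 y \<odot> a1 x \<odot> B2 y \<odot> Ti2 (- y)"
    by (simp only: a1_T2_tail)
  also have "\<dots> = R21 y x \<odot> T2 y \<odot> B2 y \<odot> a1 x \<odot> Ti2 (- y)"
    by (simp only: B2_commute_tail)
  also have "\<dots> = R21 y x \<odot> T2 y \<odot> B2 y \<odot> Ti2 (- y) \<odot> R12 x (- y) \<odot> a1 x"
    by (simp only: a1_Tinv2)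
  also have "\<dots> = R21 y x \<odot> b2 y \<odot> R12 x (- y) \<odot> a1 x"
    by (simp only: b2_eq mul2_assoc)
  finally show ?thesis .
qed

lemma b1_ad2: "b1 x \<odot> ad2 y = ad2 y \<odot> R12 x y \<odot> b1 x \<odot> R21 y (- x)"
proof -
  have "b1 x \<odot> ad2 y = T1 x \<odot> B1 x \<odot> Ti1 (- x) \<odot> ad2 y"
    by (simp only: b1_eq mul2_assoc)
  also have "\<dots> = T1 x \<odot> B1 x \<odot> ad2 y \<odot> Ti1 (- x) \<odot> R21 y (- x)"
    by (simp only: Tinv1_ad2)
  also have "\<dots> = T1 x \<odot> ad2 y \<odot> B1 x \<odot> Ti1 (- x) \<odot> R21 y (- x)"
    by (simp only: B1_commute_tail)
  also have "\<dots> = ad2 y \<odot> R12 x y \<odot> T1 x \<odot> B1 x \<odot> Ti1 (- x) \<odot> R21 y (- x)"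
    by (simp only: T1_ad2_tail)
  also have "\<dots> = ad2 y \<odot> R12 x y \<odot> b1 x \<odot> R21 y (- x)"
    by (simp only: b1_eq mul2_assoc)
  finally show ?thesis .
qed

lemma reflection_b:
  "R12 x y \<odot> b1 x \<odot> R21 y (- x) \<odot> b2 y = b2 y \<odot> R12 x (- y) \<odot> b1 x \<odot> R21 (- y) (- x)"
proof -
  have "R12 x y \<odot> b1 x \<odot> R21 y (- x) \<odot> b2 y
      = R12 x y \<odot> T1 x \<odot> B1 x \<odot> Ti1 (- x) \<odot> R21 y (- x) \<odot> T2 y \<odot> B2 y \<odot> Ti2 (- y)"
    by (simp only: b1_eq b2_eq mul2_assoc)
  also have "\<dots> = R12 x y \<odot> T1 x \<odot> B1 x \<odot> T2 y \<odot> R21 y (- x) \<odot> Ti1 (- x) \<odot> B2 y \<odot> Ti2 (- y)"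
    by (simp only: Tinv1_R21_T2_tail)
  also have "\<dots> = R12 x y \<odot> T1 x \<odot> T2 y \<odot> B1 x \<odot> R21 y (- x) \<odot> B2 y \<odot> Ti1 (- x) \<odot> Ti2 (- y)"
    by (simp only: B2_commute[of "Tinv (- x)" y, THEN mul2_tail] B1_commute[of x "T y", THEN mul2_tail]
        mul2_assoc)
  also have "\<dots> = T2 y \<odot> T1 x \<odot> R12 x y \<odot> B1 x \<odot> R21 y (- x) \<odot> B2 y \<odot> Ti1 (- x) \<odot> Ti2 (- y)"
    by (simp only: R12_T1_T2_tail)
  also have "\<dots> = T2 y \<odot> T1 x \<odot> B2 y \<odot> R12 x (- y) \<odot> B1 x \<odot> R21 (- y) (- x) \<odot> Ti1 (- x) \<odot> Ti2 (- y)"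
    by (simp only: reflection_B_tail)
  also have "\<dots> = T2 y \<odot> T1 x \<odot> B2 y \<odot> R12 x (- y) \<odot> B1 x \<odot> Ti2 (- y) \<odot> Ti1 (- x) \<odot> R21 (- y) (- x)"
    by (simp only: R21_Tinv1_Tinv2)
  also have "\<dots> = T2 y \<odot> B2 y \<odot> T1 x \<odot> R12 x (- y) \<odot> Ti2 (- y) \<odot> B1 x \<odot> Ti1 (- x) \<odot> R21 (- y) (- x)"
    by (simp only: B2_commute[of "T x" y, THEN mul2_tail] B1_commute[of x "Tinv (- y)", THEN mul2_tail]
        mul2_assoc)
  also have "\<dots> = T2 y \<odot> B2 y \<odot> Ti2 (- y) \<odot> R12 x (- y) \<odot> T1 x \<odot> B1 x \<odot> Ti1 (- x) \<odot> R21 (- y) (- x)"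
    by (simp only: T1_R12_Tinv2_tail)
  also have "\<dots> = b2 y \<odot> R12 x (- y) \<odot> b1 x \<odot> R21 (- y) (- x)"
    by (simp only: b1_eq b2_eq mul2_assoc)
  finally show ?thesis .
qed

lemma b1_R21_b2:
  "b1 x \<odot> R21 y (- x) \<odot> b2 y = R21 y x \<odot> b2 y \<odot> R12 x (- y) \<odot> b1 x \<odot> R21 (- y) (- x)"
proof -
  have "R21 y x \<odot> b2 y \<odot> R12 x (- y) \<odot> b1 x \<odot> R21 (- y) (- x)
      = R21 y x \<odot> R12 x y \<odot> b1 x \<odot> R21 y (- x) \<odot> b2 y"
    by (simp only: reflection_b)
  also have "\<dots> = b1 x \<odot> R21 y (- x) \<odot> b2 y"
    by (simp add: R21_R12_cancel)
  finally show ?thesis ..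
qed

lemma b1_b1_inverse: "b1 x \<odot> b1 (- x) = I"
proof -
  have "b1 x \<odot> b1 (- x) = T1 x \<odot> B1 x \<odot> Ti1 (- x) \<odot> T1 (- x) \<odot> B1 (- x) \<odot> Ti1 x"
    by (simp add: b1_eq mul2_assoc)
  also have "\<dots> = T1 x \<odot> B1 x \<odot> B1 (- x) \<odot> Ti1 x"
    by (simp add: Tinv1_T1_cancel)
  also have "\<dots> = I"
    by (simp add: mul2_cancel_left[OF B1_B1_inverse] T1_Tinv1)
  finally show ?thesis .
qed

lemma a2_b1: "a2 x \<odot> b1 y = R12 y x \<odot> b1 y \<odot> R21 x (- y) \<odot> a2 x"
  using flip2_eq[OF a1_b2[of x y]] by (simp add: flip2_mul2)

lemma b2_ad1: "b2 x \<odot> ad1 y = ad1 y \<odot> R21 x y \<odot> b2 x \<odot> R12 y (- x)"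
  using flip2_eq[OF b1_ad2[of x y]] by (simp add: flip2_mul2)

text \<open>In the names below, ra_k x stands for the reflected part b_k x \<odot> a_k (-x) of the tilde
annihilator and rad_k x for the reflected part ad_k (-x) \<odot> b_k (-x) of the tilde creator.\<close>

lemmas a1_b2_tail = a1_b2[THEN mul2_tail, simplified mul2_assoc]
lemmas b1_ad2_tail = b1_ad2[THEN mul2_tail, simplified mul2_assoc]
lemmas b1_R21_b2_tail = b1_R21_b2[THEN mul2_tail, simplified mul2_assoc]
lemmas reflection_b_tail = reflection_b[THEN mul2_tail, simplified mul2_assoc]
lemmas a2_b1_tail = a2_b1[THEN mul2_tail, simplified mul2_assoc]
lemmas b2_ad1_tail = b2_ad1[THEN mul2_tail, simplified mul2_assoc]
lemmas ad1_ad2_tail = ad1_ad2[THEN mul2_tail, simplified mul2_assoc]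

lemma a1_ra2: "a1 x \<odot> b2 y \<odot> a2 (- y) = R21 y x \<odot> b2 y \<odot> a2 (- y) \<odot> a1 x"
proof -
  have "a1 x \<odot> b2 y \<odot> a2 (- y) = R21 y x \<odot> b2 y \<odot> R12 x (- y) \<odot> a1 x \<odot> a2 (- y)"
    by (simp only: a1_b2_tail)
  also have "\<dots> = R21 y x \<odot> b2 y \<odot> R12 x (- y) \<odot> R21 (- y) x \<odot> a2 (- y) \<odot> a1 x"
    by (simp only: a1_a2)
  also have "\<dots> = R21 y x \<odot> b2 y \<odot> a2 (- y) \<odot> a1 x"
    by (simp add: R12_R21_cancel)
  finally show ?thesis .
qed

lemma ra1_a2: "b1 x \<odot> a1 (- x) \<odot> a2 y = R21 y x \<odot> a2 y \<odot> b1 x \<odot> a1 (- x)"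
proof -
  have "R21 y x \<odot> a2 y \<odot> b1 x \<odot> a1 (- x) = R21 y x \<odot> R12 x y \<odot> b1 x \<odot> R21 y (- x) \<odot> a2 y \<odot> a1 (- x)"
    by (simp only: a2_b1_tail)
  also have "\<dots> = b1 x \<odot> R21 y (- x) \<odot> a2 y \<odot> a1 (- x)"
    by (simp add: R21_R12_cancel)
  also have "\<dots> = b1 x \<odot> a1 (- x) \<odot> a2 y"
    by (simp only: a1_a2)
  finally show ?thesis ..
qed

lemma ra1_ra2: "b1 x \<odot> a1 (- x) \<odot> b2 y \<odot> a2 (- y) = R21 y x \<odot> b2 y \<odot> a2 (- y) \<odot> b1 x \<odot> a1 (- x)"
proof -
  have "b1 x \<odot> a1 (- x) \<odot> b2 y \<odot> a2 (- y)
      = b1 x \<odot> R21 y (- x) \<odot> b2 y \<odot> R12 (- x) (- y) \<odot> a1 (- x) \<odot> a2 (- y)"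
    by (simp only: a1_b2_tail)
  also have "\<dots> = b1 x \<odot> R21 y (- x) \<odot> b2 y \<odot> R12 (- x) (- y) \<odot> R21 (- y) (- x) \<odot> a2 (- y) \<odot> a1 (- x)"
    by (simp only: a1_a2)
  also have "\<dots> = b1 x \<odot> R21 y (- x) \<odot> b2 y \<odot> a2 (- y) \<odot> a1 (- x)"
    by (simp add: R12_R21_cancel)
  also have "\<dots> = R21 y x \<odot> b2 y \<odot> R12 x (- y) \<odot> b1 x \<odot> R21 (- y) (- x) \<odot> a2 (- y) \<odot> a1 (- x)"
    by (simp only: b1_R21_b2_tail)
  also have "\<dots> = R21 y x \<odot> b2 y \<odot> a2 (- y) \<odot> b1 x \<odot> a1 (- x)"
    by (simp only: a2_b1_tail)
  finally show ?thesis .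
qed

lemma ad1_rad2: "ad1 x \<odot> ad2 (- y) \<odot> b2 (- y) = ad2 (- y) \<odot> b2 (- y) \<odot> ad1 x \<odot> R21 y x"
proof -
  have "ad2 (- y) \<odot> b2 (- y) \<odot> ad1 x \<odot> R21 y x
      = ad2 (- y) \<odot> ad1 x \<odot> R21 (- y) x \<odot> b2 (- y) \<odot> R12 x y \<odot> R21 y x"
    by (simp add: b2_ad1_tail)
  also have "\<dots> = ad2 (- y) \<odot> ad1 x \<odot> R21 (- y) x \<odot> b2 (- y)"
    by (simp add: R12_R21_inverse mul2_one2)
  also have "\<dots> = ad1 x \<odot> ad2 (- y) \<odot> b2 (- y)"
    by (simp only: ad1_ad2_tail)
  finally show ?thesis ..
qed

lemma rad1_ad2: "ad1 (- x) \<odot> b1 (- x) \<odot> ad2 y = ad2 y \<odot> ad1 (- x) \<odot> b1 (- x) \<odot> R21 y x"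
proof -
  have "ad1 (- x) \<odot> b1 (- x) \<odot> ad2 y = ad1 (- x) \<odot> ad2 y \<odot> R12 (- x) y \<odot> b1 (- x) \<odot> R21 y x"
    by (simp add: b1_ad2)
  also have "\<dots> = ad2 y \<odot> ad1 (- x) \<odot> R21 y (- x) \<odot> R12 (- x) y \<odot> b1 (- x) \<odot> R21 y x"
    by (simp only: ad1_ad2_tail)
  also have "\<dots> = ad2 y \<odot> ad1 (- x) \<odot> b1 (- x) \<odot> R21 y x"
    by (simp add: R21_R12_cancel)
  finally show ?thesis .
qed

lemma rad1_rad2:
  "ad1 (- x) \<odot> b1 (- x) \<odot> ad2 (- y) \<odot> b2 (- y) = ad2 (- y) \<odot> b2 (- y) \<odot> ad1 (- x) \<odot> b1 (- x) \<odot> R21 y x"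
proof -
  have "ad1 (- x) \<odot> b1 (- x) \<odot> ad2 (- y) \<odot> b2 (- y)
      = ad1 (- x) \<odot> ad2 (- y) \<odot> R12 (- x) (- y) \<odot> b1 (- x) \<odot> R21 (- y) x \<odot> b2 (- y)"
    by (simp add: b1_ad2_tail)
  also have "\<dots> = ad2 (- y) \<odot> ad1 (- x) \<odot> R21 (- y) (- x) \<odot> R12 (- x) (- y) \<odot> b1 (- x) \<odot> R21 (- y) x \<odot> b2 (- y)"
    by (simp only: ad1_ad2_tail)
  also have "\<dots> = ad2 (- y) \<odot> ad1 (- x) \<odot> b1 (- x) \<odot> R21 (- y) x \<odot> b2 (- y)"
    by (simp add: R21_R12_cancel)
  also have "\<dots> = ad2 (- y) \<odot> ad1 (- x) \<odot> R21 (- y) (- x) \<odot> b2 (- y) \<odot> R12 (- x) y \<odot> b1 (- x) \<odot> R21 y x"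
    using b1_R21_b2[of "- x" "- y"] by simp
  also have "\<dots> = ad2 (- y) \<odot> b2 (- y) \<odot> ad1 (- x) \<odot> b1 (- x) \<odot> R21 y x"
    by (simp add: b2_ad1_tail)
  finally show ?thesis .
qed

lemma contr12_emb2: "contr12 \<odot> emb2 N X = emb1 N X \<odot> contr12"
  by (intro ext) (simp add: mul2_emb2_right_apply mul2_emb1_left_apply contr12_def trunc2_def if_0_simps kd_def)

lemma dl_plus_b1_contr12: "scale2 (dl (x + y)) (b1 (- y) \<odot> contr12) = scale2 (dl (x + y)) (b1 x \<odot> contr12)"
proof (cases "x + y = 0")
  case True
  then have "- y = x" by simp
  then show ?thesis by simp
next
  case False
  then show ?thesis by (simp add: dl_eq_0 scale2_def)
qed

lemma dl_minus_b1_b1_contr12: "scale2 (dl (x - y)) (b1 x \<odot> b1 (- y) \<odot> contr12) = scale2 (dl (x - y)) contr12"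
proof (cases "x - y = 0")
  case True
  then have "y = x" by simp
  then show ?thesis by (simp add: mul2_cancel_left[OF b1_b1_inverse])
next
  case False
  then show ?thesis by (simp add: dl_eq_0 scale2_def)
qed

lemma a1_rad2:
  "a1 x \<odot> ad2 (- y) \<odot> b2 (- y)
     = ad2 (- y) \<odot> b2 (- y) \<odot> R12 x y \<odot> a1 x + scale2 (dl (x + y)) (b1 x \<odot> contr12)"
proof -
  have "a1 x \<odot> ad2 (- y) \<odot> b2 (- y) = (a1 x \<odot> ad2 (- y)) \<odot> b2 (- y)"
    by (simp add: mul2_assoc)
  also have "\<dots> = ad2 (- y) \<odot> R12 x (- y) \<odot> a1 x \<odot> b2 (- y) + scale2 (dl (x + y)) (contr12 \<odot> b2 (- y))"
    by (simp add: a1_ad2 mul2_add_left mul2_scale2_left mul2_assoc)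
  also have "\<dots> = ad2 (- y) \<odot> R12 x (- y) \<odot> R21 (- y) x \<odot> b2 (- y) \<odot> R12 x y \<odot> a1 x
                   + scale2 (dl (x + y)) (b1 (- y) \<odot> contr12)"
    by (simp add: a1_b2 contr12_emb2)
  also have "\<dots> = ad2 (- y) \<odot> b2 (- y) \<odot> R12 x y \<odot> a1 x + scale2 (dl (x + y)) (b1 x \<odot> contr12)"
    by (simp add: R12_R21_cancel dl_plus_b1_contr12)
  finally show ?thesis .
qed

lemma ra1_ad2:
  "b1 x \<odot> a1 (- x) \<odot> ad2 y = ad2 y \<odot> R12 x y \<odot> b1 x \<odot> a1 (- x) + scale2 (dl (x + y)) (b1 x \<odot> contr12)"
proof -
  have "b1 x \<odot> a1 (- x) \<odot> ad2 y
      = b1 x \<odot> ad2 y \<odot> R12 (- x) y \<odot> a1 (- x) + scale2 (dl (x + y)) (b1 x \<odot> contr12)"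
    using dl_minus[of "x + y"]
    by (simp add: a1_ad2 mul2_add_right mul2_scale2_right[OF dl_commute])
  also have "\<dots> = ad2 y \<odot> R12 x y \<odot> b1 x \<odot> R21 y (- x) \<odot> R12 (- x) y \<odot> a1 (- x)
                   + scale2 (dl (x + y)) (b1 x \<odot> contr12)"
    by (simp only: b1_ad2_tail)
  also have "\<dots> = ad2 y \<odot> R12 x y \<odot> b1 x \<odot> a1 (- x) + scale2 (dl (x + y)) (b1 x \<odot> contr12)"
    by (simp add: R21_R12_cancel)
  finally show ?thesis .
qed

lemma ra1_rad2:
  "b1 x \<odot> a1 (- x) \<odot> ad2 (- y) \<odot> b2 (- y)
     = ad2 (- y) \<odot> b2 (- y) \<odot> R12 x y \<odot> b1 x \<odot> a1 (- x) + scale2 (dl (x - y)) contr12"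
proof -
  have "b1 x \<odot> a1 (- x) \<odot> ad2 (- y) \<odot> b2 (- y) = b1 x \<odot> (a1 (- x) \<odot> ad2 (- y)) \<odot> b2 (- y)"
    by (simp add: mul2_assoc)
  also have "\<dots> = b1 x \<odot> ad2 (- y) \<odot> R12 (- x) (- y) \<odot> a1 (- x) \<odot> b2 (- y)
                   + scale2 (dl (x - y)) (b1 x \<odot> contr12 \<odot> b2 (- y))"
    using dl_minus[of "x - y"]
    by (simp add: a1_ad2 mul2_add_left mul2_add_right mul2_scale2_left mul2_scale2_right[OF dl_commute]
        mul2_assoc)
  also have "\<dots> = ad2 (- y) \<odot> R12 x (- y) \<odot> b1 x \<odot> R21 (- y) (- x) \<odot> R12 (- x) (- y) \<odot> a1 (- x) \<odot> b2 (- y)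
                   + scale2 (dl (x - y)) (b1 x \<odot> b1 (- y) \<odot> contr12)"
    by (simp add: b1_ad2_tail contr12_emb2)
  also have "\<dots> = ad2 (- y) \<odot> R12 x (- y) \<odot> b1 x \<odot> a1 (- x) \<odot> b2 (- y) + scale2 (dl (x - y)) contr12"
    by (simp add: R21_R12_cancel dl_minus_b1_b1_contr12)
  also have "\<dots> = ad2 (- y) \<odot> R12 x (- y) \<odot> b1 x \<odot> R21 (- y) (- x) \<odot> b2 (- y) \<odot> R12 (- x) y \<odot> a1 (- x)
                   + scale2 (dl (x - y)) contr12"
    by (simp add: a1_b2)
  also have "\<dots> = ad2 (- y) \<odot> b2 (- y) \<odot> R12 x y \<odot> b1 x \<odot> R21 y (- x) \<odot> R12 (- x) y \<odot> a1 (- x)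
                   + scale2 (dl (x - y)) contr12"
    using reflection_b_tail[of x "- y"] by simp
  also have "\<dots> = ad2 (- y) \<odot> b2 (- y) \<odot> R12 x y \<odot> b1 x \<odot> a1 (- x) + scale2 (dl (x - y)) contr12"
    by (simp add: R21_R12_cancel)
  finally show ?thesis .
qed

lemma ra1_b2: "b1 x \<odot> a1 (- x) \<odot> b2 y = R21 y x \<odot> b2 y \<odot> R12 x (- y) \<odot> b1 x \<odot> a1 (- x)"
proof -
  have "b1 x \<odot> a1 (- x) \<odot> b2 y = b1 x \<odot> R21 y (- x) \<odot> b2 y \<odot> R12 (- x) (- y) \<odot> a1 (- x)"
    by (simp add: a1_b2)
  also have "\<dots> = R21 y x \<odot> b2 y \<odot> R12 x (- y) \<odot> b1 x \<odot> R21 (- y) (- x) \<odot> R12 (- x) (- y) \<odot> a1 (- x)"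
    by (simp only: b1_R21_b2_tail)
  also have "\<dots> = R21 y x \<odot> b2 y \<odot> R12 x (- y) \<odot> b1 x \<odot> a1 (- x)"
    by (simp add: R21_R12_cancel)
  finally show ?thesis .
qed

lemma b1_rad2: "b1 x \<odot> ad2 (- y) \<odot> b2 (- y) = ad2 (- y) \<odot> b2 (- y) \<odot> R12 x y \<odot> b1 x \<odot> R21 y (- x)"
proof -
  have "b1 x \<odot> ad2 (- y) \<odot> b2 (- y) = ad2 (- y) \<odot> R12 x (- y) \<odot> b1 x \<odot> R21 (- y) (- x) \<odot> b2 (- y)"
    by (simp add: b1_ad2_tail)
  also have "\<dots> = ad2 (- y) \<odot> b2 (- y) \<odot> R12 x y \<odot> b1 x \<odot> R21 y (- x)"
    using reflection_b[of x "- y"] by simp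
  finally show ?thesis .
qed

section \<open>The relations of the boundary algebra\<close>

abbreviation half :: 'A where "half \<equiv> sc (1 / 2)"
abbreviation aT where "aT \<equiv> a_tilde N sc a b"
abbreviation adT where "adT \<equiv> ad_tilde N sc ad b"
abbreviation aT1 where "aT1 x \<equiv> emb1 N (colmat (\<lambda>i. aT i x))"
abbreviation aT2 where "aT2 x \<equiv> emb2 N (colmat (\<lambda>i. aT i x))"
abbreviation adT1 where "adT1 x \<equiv> emb1 N (rowmat (\<lambda>j. adT j x))"
abbreviation adT2 where "adT2 x \<equiv> emb2 N (rowmat (\<lambda>j. adT j x))"

lemma half_double: "half * (z + z) = z"
proof -
  have "half * (z + z) = sc (1 / 2 + 1 / 2) * z"
    by (simp only: sc_add distrib_left distrib_right)
  then show ?thesis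
    by simp
qed

lemma scale2_half_double: "scale2 half (scale2 half (X + X)) = scale2 half X"
  unfolding scale2_def by (simp add: half_double flip: distrib_left)

lemma colmat_aT:
  "colmat (\<lambda>i. aT i x)
     = (\<lambda>i p. half * (colmat (\<lambda>i. a i x) i p + matmul N (b x) (colmat (\<lambda>i. a i (- x))) i p))"
proof (intro ext)
  fix i p
  show "colmat (\<lambda>i. aT i x) i p
      = half * (colmat (\<lambda>i. a i x) i p + matmul N (b x) (colmat (\<lambda>i. a i (- x))) i p)"
    by (cases "p = 0") (simp_all add: a_tilde_def colmat_def matmul_def)
qed

lemma rowmat_adT:
  "rowmat (\<lambda>j. adT j x)
     = (\<lambda>p j. half * (rowmat (\<lambda>j. ad j x) p j + matmul N (rowmat (\<lambda>j. ad j (- x))) (b (- x)) p j))"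
proof (intro ext)
  fix p j
  show "rowmat (\<lambda>j. adT j x) p j
      = half * (rowmat (\<lambda>j. ad j x) p j + matmul N (rowmat (\<lambda>j. ad j (- x))) (b (- x)) p j)"
    by (cases "p = 0") (simp_all add: ad_tilde_def rowmat_def matmul_def)
qed

lemma aT1_expand: "aT1 x = scale2 half (a1 x + b1 x \<odot> a1 (- x))"
  by (simp only: colmat_aT emb1_scale emb1_add emb1_matmul)

lemma aT2_expand: "aT2 x = scale2 half (a2 x + b2 x \<odot> a2 (- x))"
  by (simp only: colmat_aT emb2_scale emb2_add emb2_matmul)

lemma adT1_expand: "adT1 x = scale2 half (ad1 x + ad1 (- x) \<odot> b1 (- x))"
  by (simp only: rowmat_adT emb1_scale emb1_add emb1_matmul)

lemma adT2_expand: "adT2 x = scale2 half (ad2 x + ad2 (- x) \<odot> b2 (- x))"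
  by (simp only: rowmat_adT emb2_scale emb2_add emb2_matmul)

lemmas mul2_distrib =
  mul2_add_left mul2_add_right mul2_scale2_left mul2_scale2_right[OF sc_commute] mul2_assoc

lemma aT1_aT2: "aT1 x \<odot> aT2 y = R21 y x \<odot> aT2 y \<odot> aT1 x"
  unfolding aT1_expand aT2_expand
  by (simp only: mul2_distrib a1_a2[of x y] a1_ra2[of x y] ra1_a2[of x y] ra1_ra2[of x y]
      scale2_add add_ac)

lemma adT1_adT2: "adT1 x \<odot> adT2 y = adT2 y \<odot> adT1 x \<odot> R21 y x"
  unfolding adT1_expand adT2_expand
  by (simp only: mul2_distrib ad1_ad2[of x y] ad1_rad2[of x y] rad1_ad2[of x y] rad1_rad2[of x y]
      scale2_add add_ac)

definition delta12_plus_b12 :: "real \<Rightarrow> real \<Rightarrow> 'A op2" where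
  "delta12_plus_b12 x y = scale2 (dl (x - y)) contr12 + scale2 (dl (x + y)) (b1 x \<odot> contr12)"

lemma aT1_adT2: "aT1 x \<odot> adT2 y = adT2 y \<odot> R12 x y \<odot> aT1 x + scale2 half (delta12_plus_b12 x y)"
proof -
  txt \<open>Each of the two delta terms comes from two of the four cross terms.\<close>
  have "aT1 x \<odot> adT2 y
      = adT2 y \<odot> R12 x y \<odot> aT1 x + scale2 half (scale2 half (delta12_plus_b12 x y + delta12_plus_b12 x y))"
    unfolding aT1_expand adT2_expand delta12_plus_b12_def
    by (simp only: mul2_distrib a1_ad2[of x y] a1_rad2[of x y] ra1_ad2[of x y] ra1_rad2[of x y]
        scale2_add add_ac)
  then show ?thesis
    by (simp only: scale2_half_double)
qed

lemma aT1_b2: "aT1 x \<odot> b2 y = R21 y x \<odot> b2 y \<odot> R12 x (- y) \<odot> aT1 x"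
  unfolding aT1_expand by (simp only: mul2_distrib a1_b2[of x y] ra1_b2[of x y])

lemma b1_adT2: "b1 x \<odot> adT2 y = adT2 y \<odot> R12 x y \<odot> b1 x \<odot> R21 y (- x)"
  unfolding adT2_expand by (simp only: mul2_distrib b1_ad2[of x y] b1_rad2[of x y])

lemma rel_aa_aT: "rel_aa N Rs aT"
  unfolding rel_aa_def
proof (intro allI impI)
  fix x y i j
  assume ij: "i < N" "j < N"
  have "(aT1 x \<odot> aT2 y) i j 0 0 = (R21 y x \<odot> aT2 y \<odot> aT1 x) i j 0 0"
    by (simp only: aT1_aT2)
  then show "aT i x * aT j y = (\<Sum>p<N. \<Sum>q<N. sc (R y x j i q p) * aT q y * aT p x)"
    using ij N_pos
    by (simp add: mul2_emb1_emb2_apply mul2_emb2_emb1_apply mul2_trunc2_left_apply R21_eq colmat_def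
        mult.assoc)
qed

lemma rel_dd_adT: "rel_dd N Rs adT"
  unfolding rel_dd_def
proof (intro allI impI)
  fix x y i j
  assume ij: "i < N" "j < N"
  have "adT i x * adT j y = (adT1 x \<odot> adT2 y) 0 0 i j"
    using ij N_pos by (simp add: mul2_emb1_emb2_apply rowmat_def)
  also have "\<dots> = (adT2 y \<odot> adT1 x \<odot> R21 y x) 0 0 i j"
    by (simp only: adT1_adT2)
  also have "\<dots> = (\<Sum>s<N. adT s y * (\<Sum>r<N. adT r x * sc (R y x s r j i)))"
    using ij N_pos by (simp add: mul2_emb1_left_apply mul2_emb2_left_apply R21_eq rowmat_def trunc2_def)
  also have "\<dots> = (\<Sum>r<N. \<Sum>s<N. adT s y * adT r x * sc (R y x s r j i))"
    by (subst sum.swap) (simp add: sum_distrib_left mult.assoc)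
  finally show "adT i x * adT j y = (\<Sum>p<N. \<Sum>q<N. adT q y * adT p x * sc (R y x q p j i))" .
qed

lemma delta12_plus_b12_apply:
  "i < N \<Longrightarrow> j < N \<Longrightarrow> delta12_plus_b12 x y i 0 0 j = dl (x - y) * kd i j + dl (x + y) * b x i j"
  using N_pos by (simp add: delta12_plus_b12_def scale2_def mul2_emb1_left_apply contr12_def trunc2_def kd_def if_0_simps)

lemma rel_ad_aT_adT:
  "rel_ad N Rs aT adT (\<lambda>k1 k2 i j. half * dl (k1 - k2) * kd i j + half * dl (k1 + k2) * b k1 i j)"
  unfolding rel_ad_def
proof (intro allI impI)
  fix x y i j
  assume ij: "i < N" "j < N"
  have "aT i x * adT j y = (aT1 x \<odot> adT2 y) i 0 0 j"
    using ij N_pos by (simp add: mul2_emb1_emb2_apply colmat_def rowmat_def)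
  also have "\<dots> = (adT2 y \<odot> R12 x y \<odot> aT1 x) i 0 0 j + half * delta12_plus_b12 x y i 0 0 j"
    by (simp add: aT1_adT2 scale2_def)
  also have "(adT2 y \<odot> R12 x y \<odot> aT1 x) i 0 0 j = (\<Sum>s<N. adT s y * (\<Sum>r<N. sc (R x y i s r j) * aT r x))"
    using ij N_pos
    by (simp add: mul2_emb2_left_apply mul2_emb1_right_apply R12_def colmat_def rowmat_def trunc2_def)
  also have "\<dots> = (\<Sum>r<N. \<Sum>s<N. adT s y * sc (R x y i s r j) * aT r x)"
    by (subst sum.swap) (simp add: sum_distrib_left mult.assoc)
  finally show "aT i x * adT j y = (\<Sum>p<N. \<Sum>q<N. adT q y * sc (R x y i q p j) * aT p x)
      + (half * dl (x - y) * kd i j + half * dl (x + y) * b x i j)"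
    using ij by (simp add: delta12_plus_b12_apply distrib_left mult.assoc)
qed

lemma exchange_aT_b:
  "\<forall>k1 k2. \<forall>i<N. \<forall>j<N. \<forall>m<N. aT i k1 * b k2 j m
     = (\<Sum>p<N. \<Sum>r<N. \<Sum>s<N. \<Sum>t<N. Rs k2 k1 j i t r * b k2 t s * Rs k1 (- k2) r s p m * aT p k1)"
proof (intro allI impI)
  fix x y i j m
  assume ijm: "i < N" "j < N" "m < N"
  have "aT i x * b y j m = (aT1 x \<odot> b2 y) i j 0 m"
    using ijm N_pos by (simp add: mul2_emb1_emb2_apply colmat_def)
  also have "\<dots> = (R21 y x \<odot> b2 y \<odot> R12 x (- y) \<odot> aT1 x) i j 0 m"
    by (simp only: aT1_b2)
  also have "\<dots> = (\<Sum>r<N. \<Sum>t<N. \<Sum>s<N. \<Sum>p<N. sc (R y x j i t r) * b y t s * sc (R x (- y) r s p m) * aT p x)"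
    using ijm N_pos unfolding R21_eq
    by (simp add: mul2_emb2_left_apply mul2_trunc2_left_apply mul2_emb1_right_apply R12_apply
        colmat_def sum_distrib_left mult.assoc)
  also have "\<dots> = (\<Sum>p<N. \<Sum>r<N. \<Sum>s<N. \<Sum>t<N. sc (R y x j i t r) * b y t s * sc (R x (- y) r s p m) * aT p x)"
    by (subst (2) sum.swap, subst sum.swap, subst (2) sum.swap, subst (3) sum.swap) simp
  finally show "aT i x * b y j m
      = (\<Sum>p<N. \<Sum>r<N. \<Sum>s<N. \<Sum>t<N. Rs y x j i t r * b y t s * Rs x (- y) r s p m * aT p x)"
    by simp
qed

lemma exchange_b_adT:
  "\<forall>k1 k2. \<forall>i<N. \<forall>j<N. \<forall>m<N. b k1 i m * adT j k2
     = (\<Sum>q<N. \<Sum>t<N. \<Sum>s<N. \<Sum>r<N. adT q k2 * Rs k1 k2 i q t s * b k1 t r * Rs k2 (- k1) s r j m)"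
proof (intro allI impI)
  fix x y i j m
  assume ijm: "i < N" "j < N" "m < N"
  have "b x i m * adT j y = (b1 x \<odot> adT2 y) i 0 m j"
    using ijm N_pos by (simp add: mul2_emb1_emb2_apply rowmat_def)
  also have "\<dots> = (adT2 y \<odot> R12 x y \<odot> b1 x \<odot> R21 y (- x)) i 0 m j"
    by (simp only: b1_adT2)
  also have "\<dots> = (\<Sum>q<N. \<Sum>t<N. \<Sum>s<N. \<Sum>r<N. adT q y * sc (R x y i q t s) * b x t r * sc (R y (- x) s r j m))"
    using ijm N_pos unfolding R21_eq unfolding R12_def
    by (simp add: mul2_emb2_left_apply mul2_trunc2_left_apply mul2_emb1_left_apply trunc2_apply
        rowmat_def sum_distrib_left mult.assoc)
  finally show "b x i m * adT j y
      = (\<Sum>q<N. \<Sum>t<N. \<Sum>s<N. \<Sum>r<N. adT q y * Rs x y i q t s * b x t r * Rs y (- x) s r j m)"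
    by simp
qed

lemma refl_eq_b: "refl_eq N Rs b"
proof -
  have "trunc2 N (op21 Rs x y) = R21 x y" for x y
    unfolding R21_eq op21_def ..
  then show ?thesis
    unfolding refl_eq_def eq2_iff_trunc2
    by (simp only: trunc2_mul2 mul2_assoc reflection_b simp_thms flip: R12_def emb1_def emb2_def)
qed

lemma inv_pair_b: "inv_pair N b"
  unfolding inv_pair_def
proof (intro allI impI)
  fix x i j
  assume ij: "i < N" "j < N"
  have "emb1 N (matmul N (b x) (b (- x))) i 0 j 0 = I i 0 j 0"
    using b1_b1_inverse[of x] by (simp only: emb1_matmul)
  then show "(\<Sum>p<N. b x i p * b (- x) p j) = kd i j"
    using ij N_pos by (simp add: emb1_def trunc2_apply op_1_def matmul_def one2_def id2_def kd_def)
qed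

end

theorem mainTheorem1:
  fixes N :: nat
    and R :: "real \<Rightarrow> real \<Rightarrow> nat \<Rightarrow> nat \<Rightarrow> nat \<Rightarrow> nat \<Rightarrow> complex"
    and sc :: "complex \<Rightarrow> 'A::ring_1"
    and dl :: "real \<Rightarrow> 'A"
    and a ad :: "nat \<Rightarrow> real \<Rightarrow> 'A"
    and T Tinv :: "real \<Rightarrow> nat \<Rightarrow> nat \<Rightarrow> 'A"
    and B :: "real \<Rightarrow> nat \<Rightarrow> nat \<Rightarrow> complex"
  assumes "N \<ge> 1"
    and "yang_baxter N R"
    and "unitary_R N R"
    and "scalars sc"
    and "delta_like dl"
    and "rel_aa N (\<lambda>x y i j p q. sc (R x y i j p q)) a"
    and "rel_dd N (\<lambda>x y i j p q. sc (R x y i j p q)) ad"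
    and "rel_ad N (\<lambda>x y i j p q. sc (R x y i j p q)) a ad (\<lambda>k1 k2 i j. dl (k1 - k2) * kd i j)"
    and "well_bred N (\<lambda>x y i j p q. sc (R x y i j p q)) a ad T"
    and "is_inverse N T Tinv"
    and "refl_eq N R B"
    and "inv_pair N B"
  shows
   "let Rs = (\<lambda>x y i j p q. sc (R x y i j p q));
        b = bmat N sc T Tinv B;
        aT = a_tilde N sc a b;
        adT = ad_tilde N sc ad b
    in rel_aa N Rs aT
     \<and> rel_dd N Rs adT
     \<and> rel_ad N Rs aT adT (\<lambda>k1 k2 i j. sc (1/2) * dl (k1 - k2) * kd i j + sc (1/2) * dl (k1 + k2) * b k1 i j)
     \<and> (\<forall>k1 k2. \<forall>i<N. \<forall>j<N. \<forall>m<N.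
          aT i k1 * b k2 j m
          = (\<Sum>p<N. \<Sum>r<N. \<Sum>s<N. \<Sum>t<N. Rs k2 k1 j i t r * b k2 t s * Rs k1 (-k2) r s p m * aT p k1))
     \<and> (\<forall>k1 k2. \<forall>i<N. \<forall>j<N. \<forall>m<N.
          b k1 i m * adT j k2
          = (\<Sum>q<N. \<Sum>t<N. \<Sum>s<N. \<Sum>r<N. adT q k2 * Rs k1 k2 i q t s * b k1 t r * Rs k2 (-k1) s r j m))
     \<and> refl_eq N Rs b
     \<and> inv_pair N b"
proof -
  interpret zf_boundary N R sc dl a ad T Tinv B
    by (rule zf_boundary.intro) (fact assms)+
  show ?thesis
    unfolding Let_def
    using rel_aa_aT rel_dd_adT rel_ad_aT_adT exchange_aT_b exchange_b_adT refl_eq_b inv_pair_b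
    by (intro conjI)
qed

end
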